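(* Let $E$ be a set and let $T$ be a set of clauses over $E$, where a clause is a pair written $X\Rightarrow Y$ with $X,Y\subseteq E$, standing for the formula $\bigwedge X\Rightarrow\bigvee Y$. Define the event structure $(E,\vdash_T)$ by: $X\vdash_T Y$ iff for every $Z\subseteq E$ with $(Y\Rightarrow Z)\in T$ we have $X\cap Z\neq\emptyset$. Then the set of left-closed configurations of $(E,\vdash_T)$ equals the set of models of $T$, i.e. the set of $m\subseteq E$ such that for every clause $(X\Rightarrow Y)\in T$, $X\subseteq m$ implies $Y\cap m\neq\emptyset$.
   Context: An event structure is a pair $(E,\vdash)$ with $\vdash\subseteq\mathcal{P}(E)\times\mathcal{P}(E)$. A set $X\subseteq E$ is a left-closed configuration iff for every $Y\subseteq X$ there exists $Z\subseteq X$ with $Z\vdash Y$. *)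

theory Defs
  imports Main
begin

definition left_closed_config :: "'a set \<Rightarrow> ('a set \<Rightarrow> 'a set \<Rightarrow> bool) \<Rightarrow> 'a set \<Rightarrow> bool" where
  "left_closed_config E ent X \<longleftrightarrow> X \<subseteq> E \<and> (\<forall>Y. Y \<subseteq> X \<longrightarrow> (\<exists>Z. Z \<subseteq> X \<and> ent Z Y))"

definition clause_entails :: "'a set \<Rightarrow> ('a set \<times> 'a set) set \<Rightarrow> 'a set \<Rightarrow> 'a set \<Rightarrow> bool" where
  "clause_entails E T X Y \<longleftrightarrow> (\<forall>Z. Z \<subseteq> E \<longrightarrow> (Y, Z) \<in> T \<longrightarrow> X \<inter> Z \<noteq> {})"

definition models :: "'a set \<Rightarrow> ('a set \<times> 'a set) set \<Rightarrow> 'a set set" where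
  "models E T = {m. m \<subseteq> E \<and> (\<forall>X Y. (X, Y) \<in> T \<longrightarrow> X \<subseteq> m \<longrightarrow> Y \<inter> m \<noteq> {})}"

end

theory Submission
  imports Defs
begin

text \<open>A model \<open>m\<close> entails every \<open>Y \<subseteq> m\<close> from \<open>m\<close> itself: a clause \<open>Y \<Rightarrow> Z\<close> has its
  body inside \<open>m\<close>, so its head meets \<open>m\<close>. Conversely, if \<open>X \<subseteq> m\<close> is entailed by some
  \<open>Z \<subseteq> m\<close>, then \<open>Z\<close>, and hence \<open>m\<close>, meets the head of every clause with body \<open>X\<close>.\<close>

lemma clause_entails_self_if_model:
  assumes "m \<in> models E T" and "Y \<subseteq> m"
  shows "clause_entails E T m Y"
  using assms unfolding models_def clause_entails_def by blast

lemma left_closed_config_if_model: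
  assumes "m \<in> models E T"
  shows "left_closed_config E (clause_entails E T) m"
  using assms clause_entails_self_if_model
  unfolding left_closed_config_def models_def by blast

lemma model_if_left_closed_config:
  assumes heads: "\<forall>(X, Y) \<in> T. Y \<subseteq> E"
    and lc: "left_closed_config E (clause_entails E T) m"
  shows "m \<in> models E T"
  unfolding models_def
proof (intro CollectI conjI allI impI)
  show "m \<subseteq> E" using lc by (simp add: left_closed_config_def)
next
  fix X Y assume XY: "(X, Y) \<in> T" and "X \<subseteq> m"
  then obtain Z where "Z \<subseteq> m" and "clause_entails E T Z X"
    using lc by (auto simp: left_closed_config_def)
  moreover have "Y \<subseteq> E" using heads XY by blast
  ultimately show "Y \<inter> m \<noteq> {}"
    using XY unfolding clause_entails_def by blast
qed

theorem mainTheorem4: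
  fixes E :: "'a set" and T :: "('a set \<times> 'a set) set"
  assumes "\<forall>(X, Y) \<in> T. X \<subseteq> E \<and> Y \<subseteq> E"
  shows "{X. left_closed_config E (clause_entails E T) X} = models E T"
proof -
  have "\<forall>(X, Y) \<in> T. Y \<subseteq> E" using assms by blast
  then show ?thesis
    using model_if_left_closed_config left_closed_config_if_model by blast
qed

end
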